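(* Let $\mathcal C=\{1,\dots,n\}$, let $L$ be an evaluation scale (as in the context), let $\mu:2^{\mathcal C}\to L$ be a capacity, let $q\in\{1,\dots,n\}$ and let $x=(x_1,\dots,x_n)\in L^{n}$. (1) If $\mu$ is $q$-maxitive, then $$S_\mu(x)=\max_{A\subseteq\mathcal C,\ A\neq\emptyset,\ |A|\le q}\ \min\Big(\min_{i\in A}x_i,\ \mu(A)\Big).$$ (2) If $\mu$ is $q$-minitive, then $$S_\mu(x)=\min_{A\subsetneq\mathcal C,\ |A|\ge n-q}\ \max\Big(\max_{i\in \overline A}x_i,\ \mu(A)\Big),$$ where $\overline A=\mathcal C\setminus A$.
   Context: $L$ is either a finite totally ordered set $0=\xi_1<\xi_2<\dots<\xi_l=1$ or $L=[0,1]$. A capacity is a map $\mu:2^{\mathcal C}\to L$ with $\mu(\emptyset)=0$, $\mu(\mathcal C)=1$ and $A\subseteq B\Rightarrow\mu(A)\le\mu(B)$. The Sugeno integral of $x\in L^n$ w.r.t. $\mu$ is $S_\mu(x)=\max_{A\subseteq\mathcal C}\min(\min_{i\in A}x_i,\mu(A))$ (with $\min_{i\in\emptyset}x_i=1$), which equals $\min_{A\subseteq\mathcal C}\max(\max_{i\in\overline A}x_i,\mu(A))$ (with $\max_{i\in\emptyset}x_i=0$). A capacity $\mu$ is $q$-maxitive if for all $X\subseteq\mathcal C$ with $|X|>q$, $\mu(X)=\max_{Y\subsetneq X,\ |Y|\le q}\mu(Y)$; it is $q$-minitive if for all $X\subseteq\mathcal C$ with $|X|<n-q$, $\mu(X)=\min_{Y\supsetneq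 X,\ |Y|\ge n-q}\mu(Y)$. *)

theory Defs
  imports Complex_Main
begin

text \<open>Evaluation scale: either [0,1] or a finite chain 0 = xi_1 < ... < xi_l = 1,
  represented as a finite subset of [0,1] containing 0 and 1.\<close>
definition eval_scale :: "real set \<Rightarrow> bool" where
  "eval_scale L \<longleftrightarrow> L = {0..1} \<or> (finite L \<and> 0 \<in> L \<and> 1 \<in> L \<and> L \<subseteq> {0..1})"

abbreviation crit :: "nat \<Rightarrow> nat set" where
  "crit n \<equiv> {1..n}"

definition capacity :: "nat \<Rightarrow> real set \<Rightarrow> (nat set \<Rightarrow> real) \<Rightarrow> bool" where
  "capacity n L \<mu> \<longleftrightarrow> (\<forall>A. A \<subseteq> crit n \<longrightarrow> \<mu> A \<in> L) \<and> \<mu> {} = 0 \<and> \<mu> (crit n) = 1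
     \<and> (\<forall>A B. A \<subseteq> B \<and> B \<subseteq> crit n \<longrightarrow> \<mu> A \<le> \<mu> B)"

definition minL :: "real set \<Rightarrow> real" where
  "minL S = (if S = {} then 1 else Min S)"

definition maxL :: "real set \<Rightarrow> real" where
  "maxL S = (if S = {} then 0 else Max S)"

definition sugeno :: "nat \<Rightarrow> (nat set \<Rightarrow> real) \<Rightarrow> (nat \<Rightarrow> real) \<Rightarrow> real" where
  "sugeno n \<mu> x = Max ((\<lambda>A. min (minL (x ` A)) (\<mu> A)) ` Pow (crit n))"

definition q_maxitive :: "nat \<Rightarrow> nat \<Rightarrow> (nat set \<Rightarrow> real) \<Rightarrow> bool" where
  "q_maxitive n q \<mu> \<longleftrightarrow> (\<forall>X. X \<subseteq> crit n \<and> card X > q \<longrightarrow>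
     \<mu> X = Max (\<mu> ` {Y. Y \<subset> X \<and> card Y \<le> q}))"

definition q_minitive :: "nat \<Rightarrow> nat \<Rightarrow> (nat set \<Rightarrow> real) \<Rightarrow> bool" where
  "q_minitive n q \<mu> \<longleftrightarrow> (\<forall>X. X \<subseteq> crit n \<and> card X < n - q \<longrightarrow>
     \<mu> X = Min (\<mu> ` {Y. X \<subset> Y \<and> Y \<subseteq> crit n \<and> card Y \<ge> n - q}))"

end

theory Submission
  imports Defs
begin

text \<open>By q-maxitivity every coalition A has a subset Y with at most q elements and the same
  capacity, and replacing A by Y can only raise min (min x on A) (mu A), since shrinking a set
  raises the minimum of x over it; so the Max defining the integral may be restricted to small
  coalitions. Dually, q-minitivity gives every coalition a superset with at least n - q elements
  and the same capacity, which can only lower max (max x off A) (mu A) in the dual Min form of the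
  integral. The degenerate witnesses (the empty set, with term 0, and C itself, with term 1) are
  traded for a singleton and for the complement of a singleton.\<close>

definition sugeno_minterm :: "(nat \<Rightarrow> real) \<Rightarrow> (nat set \<Rightarrow> real) \<Rightarrow> nat set \<Rightarrow> real" where
  "sugeno_minterm x \<mu> A = min (minL (x ` A)) (\<mu> A)"

definition sugeno_maxterm :: "nat \<Rightarrow> (nat \<Rightarrow> real) \<Rightarrow> (nat set \<Rightarrow> real) \<Rightarrow> nat set \<Rightarrow> real" where
  "sugeno_maxterm n x \<mu> A = max (maxL (x ` (crit n - A))) (\<mu> A)"

lemma Max_image_eq_if_dominated:
  fixes f :: "'a \<Rightarrow> 'b::linorder"
  assumes "finite P" "S \<subseteq> P" "\<And>A. A \<in> P \<Longrightarrow> \<exists>B\<in>S. f A \<le> f B"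
  shows "Max (f ` P) = Max (f ` S)"
  using assms by (intro Max_eq_if) (auto intro: finite_subset)

lemma Min_image_eq_if_dominated:
  fixes g :: "'a \<Rightarrow> 'b::linorder"
  assumes "finite P" "S \<subseteq> P" "\<And>A. A \<in> P \<Longrightarrow> \<exists>B\<in>S. g B \<le> g A"
  shows "Min (g ` P) = Min (g ` S)"
proof (cases "P = {}")
  case False
  then have "S \<noteq> {}" using assms(3) by blast
  have "finite S" using assms(1,2) by (rule finite_subset[rotated])
  show ?thesis
  proof (rule order.antisym)
    show "Min (g ` P) \<le> Min (g ` S)"
      using assms(1,2) \<open>S \<noteq> {}\<close> by (intro Min_antimono) auto
    show "Min (g ` S) \<le> Min (g ` P)"
    proof (rule Min.boundedI)
      fix a assume "a \<in> g ` P"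
      then obtain A where "A \<in> P" "a = g A" by blast
      with assms(3) obtain B where "B \<in> S" "g B \<le> a" by blast
      then show "Min (g ` S) \<le> a"
        using \<open>finite S\<close> by (meson Min_le finite_imageI image_eqI order_trans)
    qed (use assms(1) False in auto)
  qed
qed (use assms in auto)

lemma minL_le: "finite S \<Longrightarrow> s \<in> S \<Longrightarrow> minL S \<le> s"
  unfolding minL_def by auto

lemma less_minL: "finite S \<Longrightarrow> (\<And>s. s \<in> S \<Longrightarrow> t < s) \<Longrightarrow> t < 1 \<Longrightarrow> t < minL S"
  unfolding minL_def by auto

lemma minL_antimono: "finite S \<Longrightarrow> T \<subseteq> S \<Longrightarrow> (\<And>s. s \<in> S \<Longrightarrow> s \<le> 1) \<Longrightarrow> minL S \<le> minL T"
  unfolding minL_def by (cases "T = {}") (auto intro: Min_antimono order_trans[OF Min_le])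

lemma maxL_ge: "finite S \<Longrightarrow> s \<in> S \<Longrightarrow> s \<le> maxL S"
  unfolding maxL_def by auto

lemma maxL_le: "finite S \<Longrightarrow> (\<And>s. s \<in> S \<Longrightarrow> s \<le> t) \<Longrightarrow> 0 \<le> t \<Longrightarrow> maxL S \<le> t"
  unfolding maxL_def by auto

lemma maxL_mono: "finite S \<Longrightarrow> T \<subseteq> S \<Longrightarrow> (\<And>s. s \<in> S \<Longrightarrow> 0 \<le> s) \<Longrightarrow> maxL T \<le> maxL S"
  unfolding maxL_def by (cases "T = {}") (auto intro: Max_mono order_trans[OF _ Max_ge])

lemma eval_scale_subset: "eval_scale L \<Longrightarrow> L \<subseteq> {0..1}"
  unfolding eval_scale_def by auto

lemma capacity_mono: "capacity n L \<mu> \<Longrightarrow> A \<subseteq> B \<Longrightarrow> B \<subseteq> crit n \<Longrightarrow> \<mu> A \<le> \<mu> B"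
  unfolding capacity_def by blast

lemma capacity_range:
  assumes "capacity n L \<mu>" "A \<subseteq> crit n"
  shows "0 \<le> \<mu> A" "\<mu> A \<le> 1"
  using capacity_mono[OF assms(1) empty_subsetI assms(2)] capacity_mono[OF assms(1) assms(2) order.refl]
    assms(1) unfolding capacity_def by auto

lemma q_maxitive_obtain_small_subset:
  assumes "q_maxitive n q \<mu>" "A \<subseteq> crit n"
  obtains Y where "Y \<subseteq> A" "card Y \<le> q" "\<mu> Y = \<mu> A"
proof (cases "card A \<le> q")
  case True
  then show ?thesis using that[of A] by simp
next
  case False
  let ?Ys = "{Y. Y \<subset> A \<and> card Y \<le> q}"
  have "finite A" using assms(2) finite_subset by blast
  then have "finite ?Ys" by (rule rev_finite_subset[OF finite_Pow_iff[THEN iffD2]]) blast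
  moreover have "{} \<in> ?Ys" using False by auto
  ultimately have "Max (\<mu> ` ?Ys) \<in> \<mu> ` ?Ys" by (intro Max_in) auto
  then obtain Y where Y: "Y \<in> ?Ys" "\<mu> Y = Max (\<mu> ` ?Ys)" by (elim imageE) simp
  have "\<mu> A = Max (\<mu> ` ?Ys)"
    using assms(2) False by (intro assms(1)[unfolded q_maxitive_def, rule_format]) simp
  with Y(2) have "\<mu> Y = \<mu> A" by (simp only:)
  with Y(1) show ?thesis using that[of Y] by blast
qed

lemma q_minitive_obtain_large_superset:
  assumes "q_minitive n q \<mu>" "A \<subseteq> crit n"
  obtains Y where "A \<subseteq> Y" "Y \<subseteq> crit n" "n - q \<le> card Y" "\<mu> Y = \<mu> A"
proof (cases "n - q \<le> card A")
  case True
  then show ?thesis using that[of A] assms(2) by blast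
next
  case False
  let ?Ys = "{Y. A \<subset> Y \<and> Y \<subseteq> crit n \<and> n - q \<le> card Y}"
  have "finite ?Ys" by (rule rev_finite_subset[of "Pow (crit n)"]) auto
  moreover have "crit n \<in> ?Ys" using False assms(2) by auto
  ultimately have "Min (\<mu> ` ?Ys) \<in> \<mu> ` ?Ys" by (intro Min_in) auto
  then obtain Y where Y: "Y \<in> ?Ys" "\<mu> Y = Min (\<mu> ` ?Ys)" by (elim imageE) simp
  have "\<mu> A = Min (\<mu> ` ?Ys)"
    using assms(2) False by (intro assms(1)[unfolded q_minitive_def, rule_format]) simp
  with Y(2) have "\<mu> Y = \<mu> A" by (simp only:)
  with Y(1) show ?thesis using that[of Y] by blast
qed

lemma sugeno_eq_Max_minterm: "sugeno n \<mu> x = Max (sugeno_minterm x \<mu> ` Pow (crit n))"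
  unfolding sugeno_def sugeno_minterm_def[abs_def] ..

lemma sugeno_minterm_le_sugeno: "A \<subseteq> crit n \<Longrightarrow> sugeno_minterm x \<mu> A \<le> sugeno n \<mu> x"
  unfolding sugeno_eq_Max_minterm by (intro Max_ge) auto

lemma sugeno_minterm_le_maxterm:
  assumes "capacity n L \<mu>" "A \<subseteq> crit n" "B \<subseteq> crit n"
  shows "sugeno_minterm x \<mu> A \<le> sugeno_maxterm n x \<mu> B"
proof (cases "A \<subseteq> B")
  case True
  then have "\<mu> A \<le> \<mu> B" using assms(1,3) capacity_mono by blast
  then show ?thesis unfolding sugeno_minterm_def sugeno_maxterm_def by linarith
next
  case False
  then obtain i where i: "i \<in> A" "i \<notin> B" by blast
  have "finite A" using assms(2) finite_subset by blast
  with i have "minL (x ` A) \<le> x i" by (intro minL_le) auto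
  also have "x i \<le> maxL (x ` (crit n - B))" using i assms(2) by (intro maxL_ge) auto
  finally show ?thesis unfolding sugeno_minterm_def sugeno_maxterm_def by linarith
qed

lemma sugeno_minterm_nonneg:
  assumes "capacity n L \<mu>" "\<forall>i\<in>crit n. x i \<in> {0..1}" "A \<subseteq> crit n"
  shows "0 \<le> sugeno_minterm x \<mu> A"
proof -
  have "0 \<le> minL (x ` A)"
    using assms(2,3) unfolding minL_def by (auto simp: Min_ge_iff finite_subset[OF assms(3)])
  then show ?thesis
    using capacity_range(1)[OF assms(1,3)] unfolding sugeno_minterm_def by simp
qed

lemma sugeno_maxterm_le_one:
  assumes "capacity n L \<mu>" "\<forall>i\<in>crit n. x i \<in> {0..1}" "A \<subseteq> crit n"
  shows "sugeno_maxterm n x \<mu> A \<le> 1"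
proof -
  have "maxL (x ` (crit n - A)) \<le> 1"
    using assms(2) by (intro maxL_le) auto
  then show ?thesis
    using capacity_range(2)[OF assms(1,3)] unfolding sugeno_maxterm_def by simp
qed

text \<open>The coalition of criteria on which x exceeds the integral realises the dual form.\<close>

lemma sugeno_maxterm_threshold_le:
  assumes "capacity n L \<mu>" "\<forall>i\<in>crit n. x i \<in> {0..1}"
  shows "sugeno_maxterm n x \<mu> {i \<in> crit n. sugeno n \<mu> x < x i} \<le> sugeno n \<mu> x"
proof -
  let ?t = "sugeno n \<mu> x" and ?B = "{i \<in> crit n. sugeno n \<mu> x < x i}"
  have "0 \<le> sugeno_minterm x \<mu> {}" using assms by (rule sugeno_minterm_nonneg) simp
  also have "\<dots> \<le> ?t" by (rule sugeno_minterm_le_sugeno) simp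
  finally have t_nonneg: "0 \<le> ?t" .
  have "\<mu> ?B \<le> ?t"
  proof (rule ccontr)
    assume "\<not> \<mu> ?B \<le> ?t"
    moreover have "\<mu> ?B \<le> 1" using assms(1) by (rule capacity_range) auto
    ultimately have "?t < minL (x ` ?B)" by (intro less_minL) auto
    with \<open>\<not> \<mu> ?B \<le> ?t\<close> have "?t < sugeno_minterm x \<mu> ?B" unfolding sugeno_minterm_def by simp
    moreover have "sugeno_minterm x \<mu> ?B \<le> ?t" by (rule sugeno_minterm_le_sugeno) auto
    ultimately show False by simp
  qed
  moreover have "maxL (x ` (crit n - ?B)) \<le> ?t" using t_nonneg by (intro maxL_le) auto
  ultimately show ?thesis unfolding sugeno_maxterm_def by simp
qed

lemma sugeno_eq_Min_maxterm:
  assumes "capacity n L \<mu>" "\<forall>i\<in>crit n. x i \<in> {0..1}"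
  shows "sugeno n \<mu> x = Min (sugeno_maxterm n x \<mu> ` Pow (crit n))"
proof (rule order.antisym)
  show "sugeno n \<mu> x \<le> Min (sugeno_maxterm n x \<mu> ` Pow (crit n))"
    unfolding sugeno_eq_Max_minterm
  proof (intro Max.boundedI Min.boundedI)
    fix a b
    assume "a \<in> sugeno_minterm x \<mu> ` Pow (crit n)" "b \<in> sugeno_maxterm n x \<mu> ` Pow (crit n)"
    then show "a \<le> b" using sugeno_minterm_le_maxterm[OF assms(1)] by blast
  qed auto
  have "Min (sugeno_maxterm n x \<mu> ` Pow (crit n))
      \<le> sugeno_maxterm n x \<mu> {i \<in> crit n. sugeno n \<mu> x < x i}"
    by (intro Min_le) auto
  also have "\<dots> \<le> sugeno n \<mu> x" using assms by (rule sugeno_maxterm_threshold_le)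
  finally show "Min (sugeno_maxterm n x \<mu> ` Pow (crit n)) \<le> sugeno n \<mu> x" .
qed

lemma sugeno_q_maxitive:
  assumes "capacity n L \<mu>" "\<forall>i\<in>crit n. x i \<in> {0..1}" "q_maxitive n q \<mu>" "1 \<le> q" "q \<le> n"
  shows "sugeno n \<mu> x = Max (sugeno_minterm x \<mu> ` {A. A \<subseteq> crit n \<and> A \<noteq> {} \<and> card A \<le> q})"
  unfolding sugeno_eq_Max_minterm
proof (rule Max_image_eq_if_dominated)
  let ?S = "{A. A \<subseteq> crit n \<and> A \<noteq> {} \<and> card A \<le> q}"
  fix A assume "A \<in> Pow (crit n)"
  then have A: "A \<subseteq> crit n" by simp
  obtain Y where Y: "Y \<subseteq> A" "card Y \<le> q" "\<mu> Y = \<mu> A"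
    using q_maxitive_obtain_small_subset[OF assms(3) A] .
  have "finite A" using A finite_subset by blast
  then have "minL (x ` A) \<le> minL (x ` Y)" using Y(1) A assms(2) by (intro minL_antimono) auto
  then have le_Y: "sugeno_minterm x \<mu> A \<le> sugeno_minterm x \<mu> Y"
    using Y(3) unfolding sugeno_minterm_def by linarith
  show "\<exists>B\<in>?S. sugeno_minterm x \<mu> A \<le> sugeno_minterm x \<mu> B"
  proof (cases "Y = {}")
    case True
    have "1 \<in> crit n" using assms(4,5) by simp
    then have "{1} \<in> ?S" using assms(4) by simp
    have "sugeno_minterm x \<mu> A \<le> \<mu> A" unfolding sugeno_minterm_def by simp
    also have "\<mu> A = 0" using True Y(3) assms(1) unfolding capacity_def by simp
    also have "0 \<le> sugeno_minterm x \<mu> {1}"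
      using assms(1,2) \<open>1 \<in> crit n\<close> by (intro sugeno_minterm_nonneg) auto
    finally show ?thesis using \<open>{1} \<in> ?S\<close> by blast
  next
    case False
    then show ?thesis using le_Y Y(1,2) A by blast
  qed
qed auto

lemma sugeno_q_minitive:
  assumes "capacity n L \<mu>" "\<forall>i\<in>crit n. x i \<in> {0..1}" "q_minitive n q \<mu>" "1 \<le> q" "q \<le> n"
  shows "sugeno n \<mu> x = Min (sugeno_maxterm n x \<mu> ` {A. A \<subset> crit n \<and> n - q \<le> card A})"
  unfolding sugeno_eq_Min_maxterm[OF assms(1,2)]
proof (rule Min_image_eq_if_dominated)
  let ?T = "{A. A \<subset> crit n \<and> n - q \<le> card A}"
  fix A assume "A \<in> Pow (crit n)"
  then have A: "A \<subseteq> crit n" by simp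
  obtain Y where Y: "A \<subseteq> Y" "Y \<subseteq> crit n" "n - q \<le> card Y" "\<mu> Y = \<mu> A"
    using q_minitive_obtain_large_superset[OF assms(3) A] .
  have "maxL (x ` (crit n - Y)) \<le> maxL (x ` (crit n - A))"
    using Y(1) assms(2) by (intro maxL_mono) auto
  then have le_A: "sugeno_maxterm n x \<mu> Y \<le> sugeno_maxterm n x \<mu> A"
    using Y(4) unfolding sugeno_maxterm_def by linarith
  show "\<exists>B\<in>?T. sugeno_maxterm n x \<mu> B \<le> sugeno_maxterm n x \<mu> A"
  proof (cases "Y = crit n")
    case True
    have "1 \<in> crit n" using assms(4,5) by simp
    then have "card (crit n - {1}) = n - 1"
      by (simp only: card_Diff_singleton finite_atLeastAtMost card_atLeastAtMost)
    then have "n - q \<le> card (crit n - {1})" using assms(4) by linarith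
    moreover have "crit n - {1} \<subset> crit n" using \<open>1 \<in> crit n\<close> by blast
    ultimately have "crit n - {1} \<in> ?T" by blast
    have "sugeno_maxterm n x \<mu> (crit n - {1}) \<le> 1"
      using assms(1,2) by (rule sugeno_maxterm_le_one) blast
    also have "1 = \<mu> A" using True Y(4) assms(1) unfolding capacity_def by simp
    also have "\<mu> A \<le> sugeno_maxterm n x \<mu> A" unfolding sugeno_maxterm_def by simp
    finally show ?thesis using \<open>crit n - {1} \<in> ?T\<close> by blast
  next
    case False
    then have "Y \<in> ?T" using Y(2,3) by (simp add: psubset_eq)
    then show ?thesis using le_A by blast
  qed
qed auto

theorem lemma1:
  fixes n q :: nat and L :: "real set" and \<mu> :: "nat set \<Rightarrow> real" and x :: "nat \<Rightarrow> real"
  assumes "eval_scale L"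
    and "capacity n L \<mu>"
    and "1 \<le> q" and "q \<le> n"
    and "\<forall>i\<in>crit n. x i \<in> L"
  shows "(q_maxitive n q \<mu> \<longrightarrow>
            sugeno n \<mu> x = Max ((\<lambda>A. min (minL (x ` A)) (\<mu> A)) `
                               {A. A \<subseteq> crit n \<and> A \<noteq> {} \<and> card A \<le> q}))
       \<and> (q_minitive n q \<mu> \<longrightarrow>
            sugeno n \<mu> x = Min ((\<lambda>A. max (maxL (x ` (crit n - A))) (\<mu> A)) `
                               {A. A \<subset> crit n \<and> card A \<ge> n - q}))"
proof -
  have x_range: "\<forall>i\<in>crit n. x i \<in> {0..1}"
    using assms(5) eval_scale_subset[OF assms(1)] by blast
  show ?thesis
    using sugeno_q_maxitive[OF assms(2) x_range _ assms(3,4)]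
      sugeno_q_minitive[OF assms(2) x_range _ assms(3,4)]
    unfolding sugeno_minterm_def[abs_def] sugeno_maxterm_def[abs_def] by simp
qed

end
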